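(* Let $\mathcal{X},\mathcal{Y}$ be finite sets, $P_X$ a probability distribution on $\mathcal{X}$, $d:\mathcal{X}\times\mathcal{Y}\to[0,\infty)$ a distortion function with $d(x,y)\le d_{max}$ for all $x,y$, and $Q_Y$ a probability distribution on $\mathcal{Y}$. Let $R\ge 0$ be such that $e^R$ is an integer, $M=e^R+1$, $X\sim P_X$, and $Y_0,\dots,Y_{M-1}$ i.i.d. $\sim Q_Y$ independent of $X$. Then for every $\lambda<R$, $$\mathbb{E}\Big[\min_i d(X,Y_i)\Big]\le \tilde D\big(e^{-(R-\lambda)},Q_Y\big)+\Big(\tilde D(1,Q_Y)-\tilde D\big(e^{-(R-\lambda)},Q_Y\big)\Big)e^{-e^{\lambda}}(e^{\lambda}+1)\le \tilde D\big(e^{-(R-\lambda)},Q_Y\big)+d_{max}\, e^{-e^{\lambda}}(e^{\lambda}+1).$$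
   Context: For $x\in\mathcal{X}$, $y\in\mathcal{Y}$, $u\in[0,1]$ let $p_{c,x,y,u}=Q_Y\{y': d(x,y')<d(x,y)\}+u\cdot Q_Y\{y': d(x,y')=d(x,y)\}$. For $w\in(0,1]$ define $\tilde D(w,Q_Y)=w^{-1}\,\mathbb{E}[d(X,Y)\mathbf{1}\{p_{c,X,Y,U}\le w\}]$, where $X\sim P_X$, $Y\sim Q_Y$, $U$ uniform on $[0,1]$ are independent. *)

theory Defs
  imports "HOL-Probability.Probability"
begin

definition p_c :: "('x \<Rightarrow> 'y \<Rightarrow> real) \<Rightarrow> 'y pmf \<Rightarrow> 'x \<Rightarrow> 'y \<Rightarrow> real \<Rightarrow> real" where
  "p_c d Q x y u =
     measure_pmf.prob Q {y'. d x y' < d x y} + u * measure_pmf.prob Q {y'. d x y' = d x y}"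

definition D_tilde :: "'x pmf \<Rightarrow> ('x \<Rightarrow> 'y \<Rightarrow> real) \<Rightarrow> real \<Rightarrow> 'y pmf \<Rightarrow> real" where
  "D_tilde P d w Q = inverse w *
     (\<integral>(x, y, u). d x y * of_bool (p_c d Q x y u \<le> w)
        \<partial>(measure_pmf P \<Otimes>\<^sub>M (measure_pmf Q \<Otimes>\<^sub>M uniform_measure lborel {0..1::real})))"

end

theory Submission
  imports Defs
begin

(* Fix x, write D y = d x y and tau(s) = Q{D > s}. By the layer-cake formula and independence,
   E[min_i D(Y_i)] = int_0^K tau(s)^M ds. The acceptance probability m(y) = P_U(p_c <= w) lies in
   [0, 1] and has Q-mass at least w, so G(s) = E[m(Y) 1{D(Y) > s}] >= tau(s) - (1 - w).
   With c = exp(-e^lam) (e^lam + 1) we have (1 - w)^(M-1) <= exp(-(M-1) w) = exp(-e^lam) <= c, and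
   convexity of t^M on [1 - w, 1] gives tau^M <= (1 - c)/w (tau - (1 - w))^+ + c tau pointwise.
   Integrating, E[min_i D(Y_i)] <= (1 - c)/w E[D(Y) m(Y)] + c E[D(Y)]; averaging over x turns the
   right-hand side into (1 - c) D~(w) + c D~(1). The second inequality only needs D~(w) >= 0 and
   D~(1) = E[d(X,Y)] <= dmax. *)

abbreviation unit_uniform :: "real measure" where
  "unit_uniform \<equiv> uniform_measure lborel {0..1}"

lemma prob_space_unit_uniform: "prob_space unit_uniform"
  by (rule prob_space_uniform_measure) auto

(* threshold_prob (Q{y'. d x y' < d x y}) (Q{y'. d x y' = d x y}) w is P_U(p_c d Q x y U <= w). *)
definition threshold_prob :: "real \<Rightarrow> real \<Rightarrow> real \<Rightarrow> real" where
  "threshold_prob a b w = (\<integral>u. of_bool (a + u * b \<le> w) \<partial>unit_uniform)"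

lemma threshold_prob_eq:
  assumes "0 \<le> t" "t \<le> 1" and iff: "\<And>u. 0 \<le> u \<Longrightarrow> u \<le> 1 \<Longrightarrow> a + u * b \<le> w \<longleftrightarrow> u \<le> t"
  shows "threshold_prob a b w = t"
proof -
  have "AE u in unit_uniform. of_bool (a + u * b \<le> w) = indicator {..t} u"
    by (rule AE_uniform_measureI) (auto simp: iff indicator_def)
  then have "threshold_prob a b w = measure unit_uniform {..t}"
    unfolding threshold_prob_def by (subst integral_cong_AE) auto
  also have "\<dots> = measure lborel ({0..1} \<inter> {..t}) / measure lborel {0..1::real}"
    by (rule measure_uniform_measure) auto
  also have "{0..1} \<inter> {..t} = {0..t}"
    using assms by auto
  finally show ?thesis
    using assms by simp
qed

lemma threshold_prob_nonneg: "0 \<le> threshold_prob a b w"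
  unfolding threshold_prob_def by (rule Bochner_Integration.integral_nonneg) auto

lemma threshold_prob_le_1: "threshold_prob a b w \<le> 1"
proof -
  interpret prob_space unit_uniform
    by (rule prob_space_unit_uniform)
  have "threshold_prob a b w \<le> (\<integral>u. 1 \<partial>unit_uniform)"
    unfolding threshold_prob_def by (rule integral_mono) (auto intro!: integrable_const_bound[where B=1])
  then show ?thesis
    by simp
qed

lemma threshold_prob_eq_1:
  assumes "0 \<le> b" "a + b \<le> w"
  shows "threshold_prob a b w = 1"
proof (rule threshold_prob_eq)
  fix u :: real
  assume "0 \<le> u" "u \<le> 1"
  then have "u * b \<le> b"
    using assms(1) by (simp add: mult_left_le_one_le)
  then show "a + u * b \<le> w \<longleftrightarrow> u \<le> 1"
    using assms(2) \<open>u \<le> 1\<close> by linarith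
qed auto

lemma expectation_finite_pmf:
  fixes f :: "'a::finite \<Rightarrow> real"
  shows "measure_pmf.expectation p f = (\<Sum>x\<in>UNIV. pmf p x * f x)"
  by (subst integral_measure_pmf[of UNIV]) auto

lemma prob_finite_pmf:
  fixes p :: "'a::finite pmf"
  shows "measure_pmf.prob p A = (\<Sum>x\<in>UNIV. pmf p x * of_bool (x \<in> A))"
  by (simp add: measure_measure_pmf_finite sum.If_cases Int_def)

lemma prob_less_add_prob_eq:
  fixes D :: "'a \<Rightarrow> 'b::linorder"
  shows "measure_pmf.prob p {y. D y < v} + measure_pmf.prob p {y. D y = v} = measure_pmf.prob p {y. D y \<le> v}"
proof -
  have "measure_pmf.prob p {y. D y < v} + measure_pmf.prob p {y. D y = v}
      = measure_pmf.prob p ({y. D y < v} \<union> {y. D y = v})"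
    by (rule measure_pmf.finite_measure_Union[symmetric]) auto
  also have "{y. D y < v} \<union> {y. D y = v} = {y. D y \<le> v}"
    by auto
  finally show ?thesis .
qed

lemma integral_pmf_pmf_pair_measure:
  fixes f :: "'x::finite \<Rightarrow> 'y::finite \<Rightarrow> 'u \<Rightarrow> real"
  assumes "prob_space N"
    and meas: "\<And>x y. f x y \<in> borel_measurable N" and bound: "\<And>x y u. \<bar>f x y u\<bar> \<le> K"
  shows "(\<integral>(x, y, u). f x y u \<partial>(measure_pmf P \<Otimes>\<^sub>M (measure_pmf Q \<Otimes>\<^sub>M N)))
       = (\<Sum>x\<in>UNIV. pmf P x * (\<Sum>y\<in>UNIV. pmf Q y * (\<integral>u. f x y u \<partial>N)))"
proof -
  interpret N: prob_space N by fact
  interpret QN: pair_prob_space "measure_pmf Q" N by unfold_locales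
  interpret PQN: pair_prob_space "measure_pmf P" "measure_pmf Q \<Otimes>\<^sub>M N" by unfold_locales
  have meas_QN: "(\<lambda>(y, u). f x y u) \<in> borel_measurable (measure_pmf Q \<Otimes>\<^sub>M N)" for x
    using measurable_compose_countable[where g=fst and f="\<lambda>y z. f x y (snd z)"] meas
    by (simp add: case_prod_beta measurable_snd'')
  have meas_PQN: "(\<lambda>(x, y, u). f x y u) \<in> borel_measurable (measure_pmf P \<Otimes>\<^sub>M (measure_pmf Q \<Otimes>\<^sub>M N))"
    using measurable_compose_countable[where g=fst and f="\<lambda>x z. (\<lambda>(y, u). f x y u) (snd z)"] meas_QN
    by (simp add: case_prod_beta)
  have int_QN: "integrable (measure_pmf Q \<Otimes>\<^sub>M N) (\<lambda>(y, u). f x y u)" for x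
    by (rule QN.P.integrable_const_bound[where B=K]) (use meas_QN bound in \<open>auto split: prod.splits\<close>)
  have int_PQN: "integrable (measure_pmf P \<Otimes>\<^sub>M (measure_pmf Q \<Otimes>\<^sub>M N)) (\<lambda>(x, y, u). f x y u)"
    by (rule PQN.P.integrable_const_bound[where B=K]) (use meas_PQN bound in \<open>auto split: prod.splits\<close>)
  have "(\<integral>(x, y, u). f x y u \<partial>(measure_pmf P \<Otimes>\<^sub>M (measure_pmf Q \<Otimes>\<^sub>M N)))
      = (\<integral>x. (\<integral>(y, u). f x y u \<partial>(measure_pmf Q \<Otimes>\<^sub>M N)) \<partial>measure_pmf P)"
    using PQN.integral_fst'[OF int_PQN] by (simp add: case_prod_unfold)
  also have "\<dots> = (\<integral>x. (\<integral>y. (\<integral>u. f x y u \<partial>N) \<partial>measure_pmf Q) \<partial>measure_pmf P)"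
    using QN.integral_fst'[OF int_QN] by (simp add: case_prod_unfold)
  finally show ?thesis
    by (simp add: expectation_finite_pmf)
qed

lemma D_tilde_eq_sum:
  fixes P :: "'x::finite pmf" and Q :: "'y::finite pmf"
  shows "D_tilde P d w Q = inverse w * (\<Sum>x\<in>UNIV. pmf P x * (\<Sum>y\<in>UNIV. pmf Q y * (d x y *
     threshold_prob (measure_pmf.prob Q {y'. d x y' < d x y}) (measure_pmf.prob Q {y'. d x y' = d x y}) w)))"
proof -
  define K where "K = Max (range (\<lambda>(x, y). \<bar>d x y\<bar>))"
  have K: "\<bar>d x y\<bar> \<le> K" for x y
    unfolding K_def by (rule Max_ge) (auto intro: image_eqI[where x="(x, y)"])
  have "(\<integral>(x, y, u). d x y * of_bool (p_c d Q x y u \<le> w)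
          \<partial>(measure_pmf P \<Otimes>\<^sub>M (measure_pmf Q \<Otimes>\<^sub>M unit_uniform)))
      = (\<Sum>x\<in>UNIV. pmf P x * (\<Sum>y\<in>UNIV. pmf Q y * (\<integral>u. d x y * of_bool (p_c d Q x y u \<le> w) \<partial>unit_uniform)))"
    by (rule integral_pmf_pmf_pair_measure[OF prob_space_unit_uniform, where K=K])
      (auto simp: p_c_def abs_mult intro: order_trans[OF _ K] mult_left_le_one_le)
  then show ?thesis
    by (simp add: D_tilde_def p_c_def threshold_prob_def)
qed

lemma D_tilde_one:
  fixes P :: "'x::finite pmf" and Q :: "'y::finite pmf"
  shows "D_tilde P d 1 Q = (\<Sum>x\<in>UNIV. pmf P x * (\<Sum>y\<in>UNIV. pmf Q y * d x y))"
  by (simp add: D_tilde_eq_sum threshold_prob_eq_1 prob_less_add_prob_eq)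

lemma prob_less_le_if_below:
  fixes D :: "'y::finite \<Rightarrow> real"
  assumes below: "\<And>y. D y < z \<Longrightarrow> measure_pmf.prob p {y'. D y' \<le> D y} \<le> w" and "0 \<le> w"
  shows "measure_pmf.prob p {y. D y < z} \<le> w"
proof (cases "\<exists>y. D y < z")
  case True
  define v where "v = Max (D ` {y. D y < z})"
  have "v \<in> D ` {y. D y < z}"
    unfolding v_def using True by (intro Max_in) auto
  then obtain y0 where "D y0 < z" "v = D y0"
    by auto
  have "D y \<le> v" if "D y < z" for y
    unfolding v_def using that by (intro Max_ge) auto
  then have "{y. D y < z} = {y. D y \<le> v}"
    using \<open>D y0 < z\<close> \<open>v = D y0\<close> by force
  then show ?thesis
    using below \<open>D y0 < z\<close> \<open>v = D y0\<close> by simp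
next
  case False
  then show ?thesis
    using \<open>0 \<le> w\<close> by simp
qed

lemma sum_threshold_prob_ge_at_jump:
  fixes D :: "'y::finite \<Rightarrow> real"
  assumes "measure_pmf.prob p {y. D y < z} \<le> w" "w < measure_pmf.prob p {y. D y \<le> z}"
    and below: "\<And>y. D y < z \<Longrightarrow> measure_pmf.prob p {y'. D y' \<le> D y} \<le> w"
  shows "w \<le> (\<Sum>y\<in>UNIV. pmf p y *
    threshold_prob (measure_pmf.prob p {y'. D y' < D y}) (measure_pmf.prob p {y'. D y' = D y}) w)"
proof -
  define a where "a v = measure_pmf.prob p {y. D y < v}" for v
  define b where "b v = measure_pmf.prob p {y. D y = v}" for v
  define m where "m y = threshold_prob (a (D y)) (b (D y)) w" for y
  have "a z \<le> w" "w < a z + b z"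
    using assms by (simp_all add: a_def b_def prob_less_add_prob_eq)
  then have "0 < b z"
    by linarith
  define t where "t = (w - a z) / b z"
  have t: "0 \<le> t" "t \<le> 1" "a z + t * b z = w"
    unfolding t_def using \<open>a z \<le> w\<close> \<open>w < a z + b z\<close> \<open>0 < b z\<close> by (auto simp: field_simps)
  have m_below: "m y = 1" if "D y < z" for y
    unfolding m_def by (rule threshold_prob_eq_1) (use below[OF that] in \<open>auto simp: a_def b_def prob_less_add_prob_eq\<close>)
  have m_at: "m y = t" if "D y = z" for y
    unfolding m_def using that t \<open>0 < b z\<close>
    by (intro threshold_prob_eq) (auto simp: t_def pos_le_divide_eq algebra_simps)
  have "w = (\<Sum>y\<in>UNIV. pmf p y * (of_bool (D y < z) + t * of_bool (D y = z)))"
    unfolding t(3)[symmetric] a_def b_def prob_finite_pmf sum_distrib_left sum.distrib[symmetric]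
    by (rule sum.cong) (auto simp: algebra_simps)
  also have "\<dots> \<le> (\<Sum>y\<in>UNIV. pmf p y * m y)"
    using m_below m_at threshold_prob_nonneg by (intro sum_mono mult_left_mono) (auto simp: m_def)
  finally show ?thesis
    by (simp add: m_def a_def b_def)
qed

lemma sum_threshold_prob_ge:
  fixes D :: "'y::finite \<Rightarrow> real"
  assumes "0 \<le> w" "w \<le> 1"
  shows "w \<le> (\<Sum>y\<in>UNIV. pmf p y *
    threshold_prob (measure_pmf.prob p {y'. D y' < D y}) (measure_pmf.prob p {y'. D y' = D y}) w)"
proof (cases "\<forall>y. measure_pmf.prob p {y'. D y' \<le> D y} \<le> w")
  case True
  then have "threshold_prob (measure_pmf.prob p {y'. D y' < D y}) (measure_pmf.prob p {y'. D y' = D y}) w = 1" for y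
    by (intro threshold_prob_eq_1) (auto simp: prob_less_add_prob_eq)
  then show ?thesis
    using \<open>w \<le> 1\<close> by (simp add: sum_pmf_eq_1)
next
  case False
  \<comment> \<open>z is the smallest value whose mass Q{D <= z} exceeds w: values below z are accepted
    surely, ties at z with a probability that makes the total exactly w.\<close>
  define z where "z = Min {D y | y. w < measure_pmf.prob p {y'. D y' \<le> D y}}"
  have "z \<in> {D y | y. w < measure_pmf.prob p {y'. D y' \<le> D y}}"
    unfolding z_def using False by (intro Min_in) (auto simp: not_le)
  then have "w < measure_pmf.prob p {y. D y \<le> z}"
    by auto
  have below: "measure_pmf.prob p {y'. D y' \<le> D y} \<le> w" if "D y < z" for y
  proof (rule ccontr)
    assume "\<not> measure_pmf.prob p {y'. D y' \<le> D y} \<le> w"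
    then have "z \<le> D y"
      unfolding z_def by (intro Min_le) (auto simp: not_le)
    with that show False
      by simp
  qed
  show ?thesis
  proof (rule sum_threshold_prob_ge_at_jump)
    show "measure_pmf.prob p {y. D y < z} \<le> w"
      using below \<open>0 \<le> w\<close> by (rule prob_less_le_if_below)
  qed fact+
qed

lemma integral_indicator_less:
  assumes "0 \<le> z" "z \<le> K"
  shows "(\<integral>s. (indicator {0..K} s * of_bool (s < z) :: real) \<partial>lborel) = z"
proof -
  have "(\<integral>s. (indicator {0..K} s * of_bool (s < z) :: real) \<partial>lborel) = (\<integral>s. indicator {0..<z} s \<partial>lborel)"
    by (rule Bochner_Integration.integral_cong) (use assms in \<open>auto simp: indicator_def\<close>)
  then show ?thesis
    using assms by simp
qed

lemma integrable_indicator_mult_bounded: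
  fixes f :: "real \<Rightarrow> real"
  assumes "f \<in> borel_measurable borel" "\<And>s. \<bar>f s\<bar> \<le> B"
  shows "integrable lborel (\<lambda>s. indicator {0..K} s * f s)"
proof -
  have "emeasure lborel {0..K} < \<top>"
    by (cases "0 \<le> K") auto
  then show ?thesis
    using integrableI_bounded_set_indicator[of "{0..K}" lborel f B] assms by auto
qed

lemma prod_of_bool:
  "finite I \<Longrightarrow> (\<Prod>i\<in>I. of_bool (P i) :: 'a::comm_semiring_1) = of_bool (\<forall>i\<in>I. P i)"
  by (induction I rule: finite_induct) auto

lemma Min_eq_integral_indicator_prod:
  fixes D :: "'y \<Rightarrow> real"
  assumes "\<And>y. 0 \<le> D y" "\<And>y. D y \<le> K" "I \<noteq> {}" "finite I"
  shows "Min ((\<lambda>i. D (ys i)) ` I)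
       = (\<integral>s. indicator {0..K} s * (\<Prod>i\<in>I. of_bool (s < D (ys i))) \<partial>lborel)"
proof -
  let ?m = "Min ((\<lambda>i. D (ys i)) ` I)"
  have "?m \<in> (\<lambda>i. D (ys i)) ` I"
    using assms by (intro Min_in) auto
  then have "?m = (\<integral>s. (indicator {0..K} s * of_bool (s < ?m) :: real) \<partial>lborel)"
    using assms by (subst integral_indicator_less) force+
  moreover have "(\<Prod>i\<in>I. of_bool (s < D (ys i))) = (of_bool (s < ?m) :: real)" for s
    using assms by (simp add: prod_of_bool)
  ultimately show ?thesis
    by simp
qed

lemma expectation_integral_swap:
  fixes F :: "'a \<Rightarrow> real \<Rightarrow> real"
  assumes fin: "finite (set_pmf p)" and int: "\<And>x. integrable lborel (F x)"
  shows "measure_pmf.expectation p (\<lambda>x. \<integral>s. F x s \<partial>lborel)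
       = (\<integral>s. measure_pmf.expectation p (\<lambda>x. F x s) \<partial>lborel)"
proof -
  have expectation_sum: "measure_pmf.expectation p f = (\<Sum>x\<in>set_pmf p. pmf p x * f x)" for f :: "'a \<Rightarrow> real"
    by (subst integral_measure_pmf[OF fin]) auto
  have "(\<Sum>x\<in>set_pmf p. pmf p x * (\<integral>s. F x s \<partial>lborel))
      = (\<integral>s. (\<Sum>x\<in>set_pmf p. pmf p x * F x s) \<partial>lborel)"
    using int by (simp add: Bochner_Integration.integral_sum)
  then show ?thesis
    by (simp add: expectation_sum)
qed

lemma expectation_Min_iid:
  fixes D :: "'y::finite \<Rightarrow> real" and M :: nat
  assumes D: "\<And>y. 0 \<le> D y" "\<And>y. D y \<le> K" and "0 < M"
  shows "measure_pmf.expectation (Pi_pmf {..<M} dflt (\<lambda>_. q)) (\<lambda>ys. Min ((\<lambda>i. D (ys i)) ` {..<M}))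
    = (\<integral>s. indicator {0..K} s * measure_pmf.prob q {y. s < D y} ^ M \<partial>lborel)"
proof -
  let ?P = "Pi_pmf {..<M} dflt (\<lambda>_. q)"
  have "finite (set_pmf ?P)"
    by (simp add: set_Pi_pmf finite_PiE_dflt)
  have "measure_pmf.expectation ?P (\<lambda>ys. Min ((\<lambda>i. D (ys i)) ` {..<M}))
      = measure_pmf.expectation ?P (\<lambda>ys. \<integral>s. indicator {0..K} s * (\<Prod>i<M. of_bool (s < D (ys i))) \<partial>lborel)"
    by (intro Bochner_Integration.integral_cong refl Min_eq_integral_indicator_prod) (use assms in auto)
  also have "\<dots> = (\<integral>s. measure_pmf.expectation ?P
                       (\<lambda>ys. indicator {0..K} s * (\<Prod>i<M. of_bool (s < D (ys i)))) \<partial>lborel)"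
    by (rule expectation_integral_swap[OF \<open>finite (set_pmf ?P)\<close>])
      (auto intro!: integrable_indicator_mult_bounded[where B=1] simp: abs_prod prod_of_bool)
  also have "\<dots> = (\<integral>s. indicator {0..K} s * measure_pmf.prob q {y. s < D y} ^ M \<partial>lborel)"
  proof -
    have "measure_pmf.expectation ?P (\<lambda>ys. \<Prod>i<M. of_bool (s < D (ys i)))
        = measure_pmf.prob q {y. s < D y} ^ M" for s :: real
      by (subst expectation_prod_Pi_pmf)
        (auto simp: integrable_measure_pmf_finite expectation_finite_pmf prob_finite_pmf)
    then show ?thesis
      by simp
  qed
  finally show ?thesis .
qed

lemma integral_indicator_sum_less:
  fixes D :: "'y::finite \<Rightarrow> real"
  assumes "\<And>y. 0 \<le> D y" "\<And>y. D y \<le> K"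
  shows "(\<integral>s. indicator {0..K} s * (\<Sum>y\<in>UNIV. pmf q y * h y * of_bool (s < D y)) \<partial>lborel)
       = (\<Sum>y\<in>UNIV. pmf q y * h y * D y)"
proof -
  have "(\<integral>s. indicator {0..K} s * (\<Sum>y\<in>UNIV. pmf q y * h y * of_bool (s < D y)) \<partial>lborel)
      = (\<Sum>y\<in>UNIV. pmf q y * h y * (\<integral>s. indicator {0..K} s * of_bool (s < D y) \<partial>lborel))"
    by (simp add: sum_distrib_left algebra_simps Bochner_Integration.integral_sum
        integrable_indicator_mult_bounded[where B=1])
  then show ?thesis
    using assms by (simp add: integral_indicator_less)
qed

lemma convex_on_power_nonneg: "convex_on {0::real..} (\<lambda>x. x ^ n)"
  by (cases "even n") (auto intro: convex_power_odd convex_on_subset[OF convex_power_even])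

lemma power_Suc_le_hinge:
  fixes \<tau> w c g :: real
  assumes "0 \<le> \<tau>" "\<tau> \<le> 1" "0 < w" "w \<le> 1" and c: "(1 - w) ^ N \<le> c" "c \<le> 1"
    and g: "0 \<le> g" "\<tau> - (1 - w) \<le> g"
  shows "\<tau> ^ Suc N \<le> (1 - c) / w * g + c * \<tau>"
proof (cases "\<tau> \<le> 1 - w")
  case True
  then have "\<tau> ^ N \<le> c"
    using assms by (meson order_trans power_mono)
  then have "\<tau> ^ Suc N \<le> c * \<tau>"
    using assms by (simp add: mult_left_mono mult.commute)
  moreover have "0 \<le> (1 - c) / w * g"
    using assms by auto
  ultimately show ?thesis
    by linarith
next
  case False
  define a where "a = 1 - w"
  define \<theta> where "\<theta> = (\<tau> - a) / w"
  have "0 \<le> a" "0 \<le> \<theta>" "\<theta> \<le> 1"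
    using False assms by (auto simp: a_def \<theta>_def field_simps)
  have \<tau>: "\<tau> = (1 - \<theta>) * a + \<theta> * 1"
    using assms by (simp add: a_def \<theta>_def field_simps)
  have "a ^ Suc N \<le> c * a"
    using mult_left_mono[OF c(1)[folded a_def] \<open>0 \<le> a\<close>] by (simp add: mult.commute)
  have "\<tau> ^ Suc N \<le> (1 - \<theta>) * a ^ Suc N + \<theta> * 1 ^ Suc N"
    unfolding \<tau> using \<open>0 \<le> a\<close> \<open>0 \<le> \<theta>\<close> \<open>\<theta> \<le> 1\<close>
    by (intro convex_onD[OF convex_on_power_nonneg, simplified]) auto
  also have "\<dots> \<le> (1 - \<theta>) * (c * a) + \<theta>"
    using \<open>a ^ Suc N \<le> c * a\<close> \<open>\<theta> \<le> 1\<close> by (simp add: mult_left_mono)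
  also have "\<dots> = (1 - c) / w * (\<tau> - (1 - w)) + c * \<tau>"
    using assms by (simp add: \<theta>_def a_def field_simps)
  also have "\<dots> \<le> (1 - c) / w * g + c * \<tau>"
    using assms by (intro add_right_mono mult_left_mono) auto
  finally show ?thesis .
qed

lemma prob_tail_le_weighted_tail:
  fixes D :: "'y::finite \<Rightarrow> real"
  assumes "\<And>y. m y \<le> 1" "w \<le> (\<Sum>y\<in>UNIV. pmf q y * m y)"
  shows "measure_pmf.prob q {y. s < D y} - (1 - w) \<le> (\<Sum>y\<in>UNIV. pmf q y * m y * of_bool (s < D y))"
proof -
  have "w \<le> (\<Sum>y\<in>UNIV. pmf q y * m y * of_bool (s < D y) + pmf q y * of_bool (\<not> s < D y))"
    using assms by (intro order_trans[OF assms(2)] sum_mono) (auto intro: mult_left_le)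
  also have "\<dots> = (\<Sum>y\<in>UNIV. pmf q y * m y * of_bool (s < D y)) + measure_pmf.prob q {y. \<not> s < D y}"
    unfolding prob_finite_pmf sum.distrib by simp
  also have "measure_pmf.prob q {y. \<not> s < D y} = 1 - measure_pmf.prob q {y. s < D y}"
    using measure_pmf.prob_compl[of "{y. s < D y}" q] by (simp add: set_diff_eq)
  finally show ?thesis
    by simp
qed

lemma expectation_Min_iid_le:
  fixes D :: "'y::finite \<Rightarrow> real" and N :: nat
  assumes D: "\<And>y. 0 \<le> D y" and w: "0 < w" "w \<le> 1" and c: "(1 - w) ^ N \<le> c" "c \<le> 1"
  shows "measure_pmf.expectation (Pi_pmf {..<Suc N} dflt (\<lambda>_. q)) (\<lambda>ys. Min ((\<lambda>i. D (ys i)) ` {..<Suc N}))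
    \<le> (1 - c) / w * (\<Sum>y\<in>UNIV. pmf q y * (D y *
          threshold_prob (measure_pmf.prob q {y'. D y' < D y}) (measure_pmf.prob q {y'. D y' = D y}) w))
      + c * (\<Sum>y\<in>UNIV. pmf q y * D y)"
proof -
  define K where "K = Max (range D)"
  have D_le: "D y \<le> K" for y
    unfolding K_def by (rule Max_ge) auto
  define m where "m y = threshold_prob (measure_pmf.prob q {y'. D y' < D y}) (measure_pmf.prob q {y'. D y' = D y}) w" for y
  define \<tau> where "\<tau> s = measure_pmf.prob q {y. s < D y}" for s
  define G where "G s = (\<Sum>y\<in>UNIV. pmf q y * m y * of_bool (s < D y))" for s
  have m: "0 \<le> m y" "m y \<le> 1" for y
    unfolding m_def by (rule threshold_prob_nonneg threshold_prob_le_1)+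
  have mass: "w \<le> (\<Sum>y\<in>UNIV. pmf q y * m y)"
    unfolding m_def using w by (intro sum_threshold_prob_ge) auto
  have G: "0 \<le> G s" "G s \<le> 1" for s
  proof -
    show "0 \<le> G s"
      unfolding G_def using m by (intro sum_nonneg) auto
    have "G s \<le> (\<Sum>y\<in>UNIV. pmf q y)"
      unfolding G_def using m by (intro sum_mono) (auto intro: mult_left_le)
    then show "G s \<le> 1"
      by (simp add: sum_pmf_eq_1)
  qed
  have G_ge: "\<tau> s - (1 - w) \<le> G s" for s
    unfolding \<tau>_def G_def using m(2) mass by (rule prob_tail_le_weighted_tail)
  have hinge: "indicator {0..K} s * \<tau> s ^ Suc N \<le> indicator {0..K} s * ((1 - c) / w * G s + c * \<tau> s)" for s
    using power_Suc_le_hinge[OF _ _ w c G(1) G_ge, of s] by (intro mult_left_mono) (auto simp: \<tau>_def)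
  have [measurable]: "\<tau> \<in> borel_measurable borel" "G \<in> borel_measurable borel"
    unfolding \<tau>_def G_def prob_finite_pmf by measurable
  have integrable: "integrable lborel (\<lambda>s. indicator {0..K} s * \<tau> s)"
    "integrable lborel (\<lambda>s. indicator {0..K} s * G s)"
    "integrable lborel (\<lambda>s. indicator {0..K} s * \<tau> s ^ Suc N)"
    using G by (auto simp: \<tau>_def intro!: integrable_indicator_mult_bounded[where B=1] power_le_one simp del: power_Suc)
  have "measure_pmf.expectation (Pi_pmf {..<Suc N} dflt (\<lambda>_. q)) (\<lambda>ys. Min ((\<lambda>i. D (ys i)) ` {..<Suc N}))
      = (\<integral>s. indicator {0..K} s * \<tau> s ^ Suc N \<partial>lborel)"
    unfolding \<tau>_def by (rule expectation_Min_iid) (use D D_le in auto)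
  also have "\<dots> \<le> (\<integral>s. (1 - c) / w * (indicator {0..K} s * G s) + c * (indicator {0..K} s * \<tau> s) \<partial>lborel)"
    by (rule integral_mono) (use integrable hinge in \<open>auto simp: algebra_simps\<close>)
  also have "\<dots> = (1 - c) / w * (\<integral>s. indicator {0..K} s * G s \<partial>lborel)
                   + c * (\<integral>s. indicator {0..K} s * \<tau> s \<partial>lborel)"
    using integrable by simp
  also have "(\<integral>s. indicator {0..K} s * G s \<partial>lborel) = (\<Sum>y\<in>UNIV. pmf q y * m y * D y)"
    unfolding G_def using D D_le by (rule integral_indicator_sum_less)
  also have "(\<integral>s. indicator {0..K} s * \<tau> s \<partial>lborel) = (\<Sum>y\<in>UNIV. pmf q y * 1 * D y)"
    unfolding \<tau>_def prob_finite_pmf using D D_le by (subst integral_indicator_sum_less[symmetric]) auto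
  finally show ?thesis
    by (simp add: m_def algebra_simps)
qed

lemma expectation_pair_pmf_finite:
  fixes f :: "'x::finite \<times> 'b \<Rightarrow> real"
  assumes fin: "finite (set_pmf p)"
  shows "measure_pmf.expectation (pair_pmf P p) f = (\<Sum>x\<in>UNIV. pmf P x * measure_pmf.expectation p (\<lambda>b. f (x, b)))"
proof -
  have "measure_pmf.expectation (pair_pmf P p) f = (\<Sum>z\<in>UNIV \<times> set_pmf p. pmf (pair_pmf P p) z * f z)"
    by (subst integral_measure_pmf[of "UNIV \<times> set_pmf p"]) (use fin in auto)
  also have "\<dots> = (\<Sum>x\<in>UNIV. \<Sum>b\<in>set_pmf p. pmf P x * (pmf p b * f (x, b)))"
    by (simp only: sum.cartesian_product) (rule sum.cong, auto simp: pmf_pair)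
  also have "\<dots> = (\<Sum>x\<in>UNIV. pmf P x * measure_pmf.expectation p (\<lambda>b. f (x, b)))"
    by (simp add: integral_measure_pmf[OF fin] sum_distrib_left)
  finally show ?thesis .
qed

lemma expectation_Min_iid_le_D_tilde:
  fixes P :: "'x::finite pmf" and Q :: "'y::finite pmf" and N :: nat
  assumes "\<And>x y. 0 \<le> d x y" "0 < w" "w \<le> 1" "(1 - w) ^ N \<le> c" "c \<le> 1"
  shows "measure_pmf.expectation (pair_pmf P (Pi_pmf {..<Suc N} dflt (\<lambda>_. Q)))
           (\<lambda>(x, ys). Min ((\<lambda>i. d x (ys i)) ` {..<Suc N}))
         \<le> D_tilde P d w Q + (D_tilde P d 1 Q - D_tilde P d w Q) * c"
proof -
  define Ew where "Ew x = (\<Sum>y\<in>UNIV. pmf Q y * (d x y *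
     threshold_prob (measure_pmf.prob Q {y'. d x y' < d x y}) (measure_pmf.prob Q {y'. d x y' = d x y}) w))" for x
  define E1 where "E1 x = (\<Sum>y\<in>UNIV. pmf Q y * d x y)" for x
  have "finite (set_pmf (Pi_pmf {..<Suc N} dflt (\<lambda>_. Q)))"
    by (simp add: set_Pi_pmf finite_PiE_dflt)
  then have "measure_pmf.expectation (pair_pmf P (Pi_pmf {..<Suc N} dflt (\<lambda>_. Q)))
           (\<lambda>(x, ys). Min ((\<lambda>i. d x (ys i)) ` {..<Suc N}))
      = (\<Sum>x\<in>UNIV. pmf P x * measure_pmf.expectation (Pi_pmf {..<Suc N} dflt (\<lambda>_. Q))
           (\<lambda>ys. Min ((\<lambda>i. d x (ys i)) ` {..<Suc N})))"
    by (simp add: expectation_pair_pmf_finite)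
  also have "\<dots> \<le> (\<Sum>x\<in>UNIV. pmf P x * ((1 - c) / w * Ew x + c * E1 x))"
    unfolding Ew_def E1_def using assms by (intro sum_mono mult_left_mono expectation_Min_iid_le) auto
  also have "\<dots> = (1 - c) * (inverse w * (\<Sum>x\<in>UNIV. pmf P x * Ew x)) + c * (\<Sum>x\<in>UNIV. pmf P x * E1 x)"
    by (simp only: sum_distrib_left sum.distrib[symmetric]) (rule sum.cong, auto simp: algebra_simps divide_inverse)
  also have "\<dots> = D_tilde P d w Q + (D_tilde P d 1 Q - D_tilde P d w Q) * c"
    by (simp add: D_tilde_eq_sum[of P d w] D_tilde_one Ew_def E1_def algebra_simps)
  finally show ?thesis .
qed

lemma D_tilde_nonneg:
  fixes P :: "'x::finite pmf" and Q :: "'y::finite pmf"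
  assumes "\<And>x y. 0 \<le> d x y" "0 \<le> w"
  shows "0 \<le> D_tilde P d w Q"
  unfolding D_tilde_eq_sum using assms
  by (intro mult_nonneg_nonneg sum_nonneg) (auto intro!: mult_nonneg_nonneg threshold_prob_nonneg)

lemma D_tilde_one_le:
  fixes P :: "'x::finite pmf" and Q :: "'y::finite pmf"
  assumes "\<And>x y. d x y \<le> dmax"
  shows "D_tilde P d 1 Q \<le> dmax"
proof -
  have "D_tilde P d 1 Q \<le> (\<Sum>x\<in>UNIV. pmf P x * (\<Sum>y\<in>UNIV. pmf Q y * dmax))"
    unfolding D_tilde_one using assms by (intro sum_mono mult_left_mono) auto
  then show ?thesis
    by (simp add: sum_distrib_right[symmetric] sum_pmf_eq_1)
qed

lemma one_minus_power_le_exp: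
  fixes w :: real
  assumes "w \<le> 1"
  shows "(1 - w) ^ n \<le> exp (- (n * w))"
proof -
  have "(1 - w) ^ n \<le> exp (- w) ^ n"
    using assms exp_ge_add_one_self[of "- w"] by (intro power_mono) auto
  then show ?thesis
    by (simp add: exp_of_nat_mult[symmetric])
qed

lemma exp_neg_mult_add_one_le_1:
  fixes t :: real
  shows "exp (- t) * (t + 1) \<le> 1"
  using exp_ge_add_one_self[of t] by (simp add: exp_minus field_simps)

theorem corollary1:
  fixes P :: "'x::finite pmf" and Q :: "'y::finite pmf"
    and d :: "'x \<Rightarrow> 'y \<Rightarrow> real" and dmax R lam :: real and M :: nat
  assumes d_nonneg: "\<And>x y. 0 \<le> d x y"
    and d_bound: "\<And>x y. d x y \<le> dmax"
    and R_nonneg: "0 \<le> R"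
    and expR_int: "exp R \<in> \<int>"
    and M_def: "real M = exp R + 1"
    and lam: "lam < R"
  shows "measure_pmf.expectation (pair_pmf P (Pi_pmf {..<M} undefined (\<lambda>_. Q)))
           (\<lambda>(x, ys). Min ((\<lambda>i. d x (ys i)) ` {..<M}))
         \<le> D_tilde P d (exp (-(R - lam))) Q
           + (D_tilde P d 1 Q - D_tilde P d (exp (-(R - lam))) Q) * exp (- exp lam) * (exp lam + 1)
       \<and> D_tilde P d (exp (-(R - lam))) Q
           + (D_tilde P d 1 Q - D_tilde P d (exp (-(R - lam))) Q) * exp (- exp lam) * (exp lam + 1)
         \<le> D_tilde P d (exp (-(R - lam))) Q + dmax * exp (- exp lam) * (exp lam + 1)"
proof -
  define w where "w = exp (-(R - lam))"
  define c where "c = exp (- exp lam) * (exp lam + 1)"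
  obtain N where MN: "M = Suc N"
    using M_def by (metis add_pos_pos exp_gt_zero gr0_implies_Suc of_nat_0_less_iff zero_less_one)
  have "w \<le> 1"
    using lam by (simp add: w_def)
  have "(1 - w) ^ N \<le> exp (- (N * w))"
    using \<open>w \<le> 1\<close> by (rule one_minus_power_le_exp)
  also have "N * w = exp lam"
    using M_def MN by (simp add: w_def exp_add[symmetric])
  also have "exp (- exp lam) \<le> c"
    by (simp add: c_def)
  finally have "(1 - w) ^ N \<le> c" .
  then have part1: "measure_pmf.expectation (pair_pmf P (Pi_pmf {..<M} undefined (\<lambda>_. Q)))
           (\<lambda>(x, ys). Min ((\<lambda>i. d x (ys i)) ` {..<M}))
         \<le> D_tilde P d w Q + (D_tilde P d 1 Q - D_tilde P d w Q) * c"
    unfolding MN using d_nonneg lam exp_neg_mult_add_one_le_1[of "exp lam"]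
    by (intro expectation_Min_iid_le_D_tilde) (auto simp: w_def c_def)
  have "D_tilde P d 1 Q \<le> dmax" "0 \<le> D_tilde P d w Q"
    using D_tilde_one_le[of d dmax] D_tilde_nonneg[of d w] d_bound d_nonneg by (auto simp: w_def)
  then have part2: "(D_tilde P d 1 Q - D_tilde P d w Q) * c \<le> dmax * c"
    by (intro mult_right_mono) (auto simp: c_def)
  show ?thesis
    using part1 part2 by (simp add: w_def c_def mult.assoc)
qed

end
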